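(* Let $n \geqslant 1$ and let $c \in \mathfrak{S}_{n+1}$ be a Coxeter element. Set $\lambda = \boldsymbol{\lambda}(c)$. Then $\mathcal{RSK}_{\lambda,c} = \mathcal{RSK}_\lambda$.
   Context: Coxeter elements: $s_i=(i,i+1)$; $c\in\mathfrak{S}_{n+1}$ is Coxeter if it is a product of $s_1,\dots,s_n$ each exactly once. Every Coxeter element is a long cycle $c=(c_1,\dots,c_m,c_{m+1},\dots,c_{n+1})$ with $c_1=1<c_2<\dots<c_m=n+1>c_{m+1}>\dots>c_{n+1}>1$; put $\mathbf L_c=\{c_2,\dots,c_{m-1}\}$, $\mathbf R_c=\{c_{m+1},\dots,c_{n+1}\}$. With $\mathbf L=\mathbf L_c\cup\{1\}=\{\ell_1<\dots<\ell_p\}$, $\mathbf R=\mathbf R_c\cup\{n+1\}$, $\boldsymbol\lambda(c)$ is the integer partition with $\boldsymbol\lambda(c)_i=\#\{r\in\mathbf R:\ell_i<r\}$; its Ferrers diagram $\mathrm{Fer}(\lambda)=\{(i,j):j\le\lambda_i\}$ has row $i$ labelled $\ell_i$ and column $j$ labelled $r_{q-j+1}$ where $\mathbf R=\{r_1<\dots<r_q\}$; write $[\ell,r]$ for the box with row label $\ell$ and column label $r$ (it exists iff $\ell<r$). One has $\lambda_1+\ell(\lambda)-1=n$. Diagonals: $D_k(\lambda)=\{(i,j)\in\mathrm{Fer}(\lambda):\lambda_1+i-j=k\}$, $\delta_k=\max\{\min(i,j):(i,j)\in D_k(\lambda)\}$; the box $(i,j)\in D_k(\lambda)$ has coordinates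 $\langle k,\delta\rangle_\lambda$ with $\delta=\delta_k-\min(i,j)+1$. $\square_k(\lambda)$ is the order ideal of $(\mathrm{Fer}(\lambda),\text{componentwise order})$ generated by $D_k(\lambda)$. Greene–Kleitman invariant: for an acyclic directed graph $G$ and $g:G_0\to\mathbb{N}$, $M_t$ ($t\ge1$) is the maximum over $t$-tuples of (possibly one-vertex) directed paths of the sum of $g$ over the union of their vertex sets, $M_0=0$, and $\mathrm{GK}_G(g)=(M_t-M_{t-1})_{t\ge1}$. $\mathcal{RSK}_\lambda$ (Gansner): $G_\lambda$ is the directed graph on $\mathrm{Fer}(\lambda)$ with arrows $(i,j)\to(i,j+1)$ and $(i,j)\to(i+1,j)$; for a filling $f:\mathrm{Fer}(\lambda)\to\mathbb{N}$, $\mathcal{RSK}_\lambda(f)(\langle k,\delta\rangle_\lambda)$ is the $\delta$-th part of $\mathrm{GK}$ of $f$ restricted to the full subgraph of $G_\lambda$ on $\square_k(\lambda)$. $\mathcal{RSK}_{\lambda,c}$: $\mathrm{AR}(c)$ is the directed graph on transpositions $(i,j)$, $1\le i<j\le n+1$, with arrows $(i,j)\to(i,c(j))$ if $i<c(j)$ and $(i,j)\to(c(i),j)$ if $c(i)<j$; $\mathrm{AR}^{[k]}(c)$ is its full subgraph on $(\ell,r)$ with $\ell\le k<r$. For a filling $f$ of $\lambda$, $\mathrm{rep}_{\lambda,c}(f)(\ell,r)=f([\ell,r])$ if $\ell\in\mathbf L,r\in\mathbf R,\ell<r$ and $0$ otherwise; $\mathcal{RSK}_{\lambda,c}(f)(\langle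 k,\delta\rangle_\lambda)$ is the $\delta$-th part of $\mathrm{GK}_{\mathrm{AR}^{[k]}(c)}$ of the restriction of $\mathrm{rep}_{\lambda,c}(f)$. *)

theory Defs
  imports Main "HOL-Combinatorics.Transposition"
begin

(* Permutations of {1..n+1} are functions nat => nat (identity outside).
   s_i = transpose i (i+1).  A Coxeter element is a product of s_1..s_n,
   each exactly once, in some order. *)
definition coxeter :: "nat \<Rightarrow> (nat \<Rightarrow> nat) \<Rightarrow> bool" where
  "coxeter n c \<longleftrightarrow> (\<exists>xs. distinct xs \<and> set xs = {1..n} \<and>
      c = foldr (\<lambda>i g. transpose i (Suc i) \<circ> g) xs id)"

(* cycle c = (c_1,...,c_{n+1}) with c_1 = 1, c_{k+1} = c(c_k), so c_k = c^(k-1)(1);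
   m_idx = m - 1 where c_m = n+1 *)
definition m_idx :: "nat \<Rightarrow> (nat \<Rightarrow> nat) \<Rightarrow> nat" where
  "m_idx n c = (LEAST j. (c ^^ j) 1 = Suc n)"

(* L = L_c \<union> {1} = {c_1,...,c_{m-1}} *)
definition Lset :: "nat \<Rightarrow> (nat \<Rightarrow> nat) \<Rightarrow> nat set" where
  "Lset n c = {(c ^^ j) 1 | j. j < m_idx n c}"

(* R = R_c \<union> {n+1} = {c_m,...,c_{n+1}} *)
definition Rset :: "nat \<Rightarrow> (nat \<Rightarrow> nat) \<Rightarrow> nat set" where
  "Rset n c = {(c ^^ j) 1 | j. m_idx n c \<le> j \<and> j \<le> n}"

definition ell :: "nat \<Rightarrow> (nat \<Rightarrow> nat) \<Rightarrow> nat \<Rightarrow> nat" where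
  "ell n c i = sorted_list_of_set (Lset n c) ! (i - 1)"

(* the partition lambda(c), as a function of the 1-based row index (0 outside 1..p) *)
definition lamc :: "nat \<Rightarrow> (nat \<Rightarrow> nat) \<Rightarrow> nat \<Rightarrow> nat" where
  "lamc n c i = (if 1 \<le> i \<and> i \<le> card (Lset n c)
                  then card {r \<in> Rset n c. ell n c i < r} else 0)"

(* Ferrers diagram of a partition lam (1-based parts, lam i = 0 beyond its length) *)
definition Fer :: "(nat \<Rightarrow> nat) \<Rightarrow> (nat \<times> nat) set" where
  "Fer lam = {(i, j). 1 \<le> i \<and> 1 \<le> j \<and> j \<le> lam i}"

definition Diag :: "(nat \<Rightarrow> nat) \<Rightarrow> nat \<Rightarrow> (nat \<times> nat) set" where
  "Diag lam k = {(i, j) \<in> Fer lam. lam 1 + i = k + j}"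

definition delta :: "(nat \<Rightarrow> nat) \<Rightarrow> nat \<Rightarrow> nat" where
  "delta lam k = Max ((\<lambda>(i, j). min i j) ` Diag lam k)"

definition sq :: "(nat \<Rightarrow> nat) \<Rightarrow> nat \<Rightarrow> (nat \<times> nat) set" where
  "sq lam k = {b \<in> Fer lam. \<exists>d \<in> Diag lam k. fst b \<le> fst d \<and> snd b \<le> snd d}"

(* diagonal index k and depth delta of a box (i,j), i.e. (i,j) = <k,delta>_lam *)
definition box_k :: "(nat \<Rightarrow> nat) \<Rightarrow> nat \<times> nat \<Rightarrow> nat" where
  "box_k lam b = lam 1 + fst b - snd b"

definition box_delta :: "(nat \<Rightarrow> nat) \<Rightarrow> nat \<times> nat \<Rightarrow> nat" where
  "box_delta lam b = delta lam (box_k lam b) - min (fst b) (snd b) + 1"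

(* Greene-Kleitman invariant of the full subgraph on V of a digraph with arrows E *)
definition is_path :: "'a set \<Rightarrow> ('a \<Rightarrow> 'a \<Rightarrow> bool) \<Rightarrow> 'a list \<Rightarrow> bool" where
  "is_path V E p \<longleftrightarrow> p \<noteq> [] \<and> distinct p \<and> set p \<subseteq> V \<and>
     (\<forall>i. Suc i < length p \<longrightarrow> E (p ! i) (p ! Suc i))"

definition gkM :: "'a set \<Rightarrow> ('a \<Rightarrow> 'a \<Rightarrow> bool) \<Rightarrow> ('a \<Rightarrow> nat) \<Rightarrow> nat \<Rightarrow> nat" where
  "gkM V E g t = Max {sum g (\<Union>p \<in> set ps. set p) | ps. length ps = t \<and> (\<forall>p \<in> set ps. is_path V E p)}"

definition gk_part :: "'a set \<Rightarrow> ('a \<Rightarrow> 'a \<Rightarrow> bool) \<Rightarrow> ('a \<Rightarrow> nat) \<Rightarrow> nat \<Rightarrow> nat" where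
  "gk_part V E g d = gkM V E g d - gkM V E g (d - 1)"

definition gl_edge :: "nat \<times> nat \<Rightarrow> nat \<times> nat \<Rightarrow> bool" where
  "gl_edge a b \<longleftrightarrow> (fst b = fst a \<and> snd b = Suc (snd a)) \<or> (fst b = Suc (fst a) \<and> snd b = snd a)"

definition RSK_lam :: "(nat \<Rightarrow> nat) \<Rightarrow> (nat \<times> nat \<Rightarrow> nat) \<Rightarrow> nat \<times> nat \<Rightarrow> nat" where
  "RSK_lam lam f b = gk_part (sq lam (box_k lam b)) gl_edge f (box_delta lam b)"

(* AR(c): vertices the transpositions (i,j), 1 <= i < j <= n+1 *)
definition ar_vert :: "nat \<Rightarrow> (nat \<times> nat) set" where
  "ar_vert n = {(i, j). 1 \<le> i \<and> i < j \<and> j \<le> Suc n}"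

definition ar_edge :: "(nat \<Rightarrow> nat) \<Rightarrow> nat \<times> nat \<Rightarrow> nat \<times> nat \<Rightarrow> bool" where
  "ar_edge c a b \<longleftrightarrow>
     (fst a < c (snd a) \<and> b = (fst a, c (snd a))) \<or> (c (fst a) < snd a \<and> b = (c (fst a), snd a))"

definition ar_k :: "nat \<Rightarrow> nat \<Rightarrow> (nat \<times> nat) set" where
  "ar_k n k = {(l, r) \<in> ar_vert n. l \<le> k \<and> k < r}"

(* box [l,r]: row index of l in L, column j with r = r_{q-j+1} *)
definition rep :: "nat \<Rightarrow> (nat \<Rightarrow> nat) \<Rightarrow> (nat \<times> nat \<Rightarrow> nat) \<Rightarrow> nat \<times> nat \<Rightarrow> nat" where
  "rep n c f a = (let l = fst a; r = snd a in
     if l \<in> Lset n c \<and> r \<in> Rset n c \<and> l < r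
     then f (card {x \<in> Lset n c. x \<le> l}, card {x \<in> Rset n c. r \<le> x}) else 0)"

definition RSK_lam_c :: "nat \<Rightarrow> (nat \<Rightarrow> nat) \<Rightarrow> (nat \<times> nat \<Rightarrow> nat) \<Rightarrow> nat \<times> nat \<Rightarrow> nat" where
  "RSK_lam_c n c f b = gk_part (ar_k n (box_k (lamc n c) b)) (ar_edge c) (rep n c f)
                         (box_delta (lamc n c) b)"

end

theory Submission
  imports Defs
begin

(* Write the Coxeter element as the cycle (\<sigma> 0, \<sigma> 1, ..., \<sigma> n) with \<sigma> 0 = 1, \<sigma>
   increasing up to its peak \<sigma> m = n + 1 and decreasing afterwards; this follows by induction
   on n, since s_(n+1) commutes with all s_i for i < n and can therefore be moved to one end
   of the word, where it inserts n + 2 next to n + 1 in the cycle.  Then L = \<sigma> ` {0..<m},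
   R = \<sigma> ` {m..n}, and box (i, j) of \<lambda>(c) is the transposition (\<sigma> (i - 1), \<sigma> (m + j - 1)).
   Since exactly k of the values \<sigma> t are at most k, the order ideal generated by the k-th
   diagonal consists precisely of the boxes [l, r] with l \<le> k < r.  So the boxes of this
   ideal embed into AR^[k](c), the arrows of G_\<lambda> go to the arrows of AR(c), the image is
   closed under outgoing arrows, and rep f vanishes off the image.  A path of AR^[k](c) meets
   such a set in a suffix, so families of paths can be cut down to the image without losing
   weight, and the two Greene-Kleitman invariants coincide. *)

section \<open>Greene-Kleitman invariants along embeddings\<close>

lemma is_path_iff:
  "is_path V E p \<longleftrightarrow> p \<noteq> [] \<and> distinct p \<and> set p \<subseteq> V \<and> successively E p"
  unfolding is_path_def successively_conv_nth by simp

lemma successively_filter_forward_closed: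
  assumes "successively E p" "set p \<subseteq> V" "\<And>x y. x \<in> W \<Longrightarrow> y \<in> V \<Longrightarrow> E x y \<Longrightarrow> y \<in> W"
  shows "successively E (filter (\<lambda>x. x \<in> W) p)"
  using assms by (induction E p rule: successively.induct) (auto simp: successively_Cons)

definition path_families :: "'a set \<Rightarrow> ('a \<Rightarrow> 'a \<Rightarrow> bool) \<Rightarrow> nat \<Rightarrow> 'a list list set" where
  "path_families V E t = {ps. length ps = t \<and> (\<forall>p \<in> set ps. is_path V E p)}"

definition covered_weight :: "('a \<Rightarrow> nat) \<Rightarrow> 'a list list \<Rightarrow> nat" where
  "covered_weight g ps = sum g (\<Union>p \<in> set ps. set p)"

lemma gkM_eq_Max: "gkM V E g t = Max (covered_weight g ` path_families V E t)"
  unfolding gkM_def path_families_def covered_weight_def by (rule arg_cong[where f = Max]) blast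

lemma finite_path_families:
  assumes "finite V"
  shows "finite (path_families V E t)"
proof (rule finite_subset)
  show "path_families V E t \<subseteq> {ps. set ps \<subseteq> {p. set p \<subseteq> V \<and> distinct p} \<and> length ps = t}"
    unfolding path_families_def is_path_def by auto
  show "finite {ps. set ps \<subseteq> {p. set p \<subseteq> V \<and> distinct p} \<and> length ps = t}"
    by (intro finite_lists_length_eq finite_subset_distinct assms)
qed

lemma replicate_in_path_families: "v \<in> V \<Longrightarrow> replicate t [v] \<in> path_families V E t"
  unfolding path_families_def is_path_def by auto

lemma path_families_covered_subset:
  "ps \<in> path_families V E t \<Longrightarrow> (\<Union>p \<in> set ps. set p) \<subseteq> V"
  unfolding path_families_def is_path_iff by auto

lemma gkM_le_gkM:
  assumes "finite V1" "finite V2" "V1 \<noteq> {}"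
    and "\<And>ps. ps \<in> path_families V1 E1 t \<Longrightarrow>
           \<exists>qs \<in> path_families V2 E2 t. covered_weight g1 ps \<le> covered_weight g2 qs"
  shows "gkM V1 E1 g1 t \<le> gkM V2 E2 g2 t"
proof -
  let ?W1 = "covered_weight g1 ` path_families V1 E1 t"
  let ?W2 = "covered_weight g2 ` path_families V2 E2 t"
  obtain v where "v \<in> V1" using assms(3) by blast
  then have "?W1 \<noteq> {}" using replicate_in_path_families by (metis empty_iff imageI)
  then have "Max ?W1 \<in> ?W1" using finite_path_families[OF assms(1)] by (intro Max_in finite_imageI)
  then obtain ps where ps: "ps \<in> path_families V1 E1 t" "Max ?W1 = covered_weight g1 ps" by blast
  obtain qs where qs: "qs \<in> path_families V2 E2 t" "covered_weight g1 ps \<le> covered_weight g2 qs"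
    using assms(4)[OF ps(1)] by blast
  have "covered_weight g2 qs \<le> Max ?W2"
    using qs(1) finite_path_families[OF assms(2)] by (intro Max_ge finite_imageI imageI)
  then show ?thesis unfolding gkM_eq_Max using ps(2) qs(2) by linarith
qed

lemma gkM_le_of_embedding:
  assumes "finite V1" "finite V2" "V1 \<noteq> {}" "inj_on \<phi> V1" "\<phi> ` V1 \<subseteq> V2"
    and "\<And>x y. x \<in> V1 \<Longrightarrow> y \<in> V1 \<Longrightarrow> E1 x y \<Longrightarrow> E2 (\<phi> x) (\<phi> y)"
    and "\<And>x. x \<in> V1 \<Longrightarrow> g2 (\<phi> x) = g1 x"
  shows "gkM V1 E1 g1 t \<le> gkM V2 E2 g2 t"
proof (rule gkM_le_gkM[OF assms(1-3)])
  fix ps assume ps: "ps \<in> path_families V1 E1 t"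
  have "is_path V2 E2 (map \<phi> p)" if "p \<in> set ps" for p
  proof -
    have p: "p \<noteq> []" "distinct p" "set p \<subseteq> V1" "successively E1 p"
      using ps that unfolding path_families_def is_path_iff by auto
    have "successively E2 (map \<phi> p)"
      unfolding successively_map
      by (rule successively_mono[OF p(4)]) (use p(3) assms(6) in blast)
    then show ?thesis
      unfolding is_path_iff using p assms(4,5) by (auto simp: distinct_map inj_on_subset)
  qed
  then have "map (map \<phi>) ps \<in> path_families V2 E2 t"
    using ps unfolding path_families_def by auto
  moreover have "covered_weight g2 (map (map \<phi>) ps) = covered_weight g1 ps"
  proof -
    have U: "(\<Union>p \<in> set ps. set p) \<subseteq> V1" by (rule path_families_covered_subset[OF ps])
    have "(\<Union>q \<in> set (map (map \<phi>) ps). set q) = \<phi> ` (\<Union>p \<in> set ps. set p)"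
      by (simp add: image_UN)
    then show ?thesis
      unfolding covered_weight_def
      by (simp add: sum.reindex inj_on_subset[OF assms(4) U]) (use U assms(7) in \<open>auto intro: sum.cong\<close>)
  qed
  ultimately show "\<exists>qs \<in> path_families V2 E2 t. covered_weight g1 ps \<le> covered_weight g2 qs"
    by force
qed

lemma gkM_le_restrict_to_support:
  assumes "finite V" "W \<subseteq> V" "W \<noteq> {}"
    and forward: "\<And>x y. x \<in> W \<Longrightarrow> y \<in> V \<Longrightarrow> E x y \<Longrightarrow> y \<in> W"
    and support: "\<And>y. y \<in> V - W \<Longrightarrow> g y = 0"
  shows "gkM V E g t \<le> gkM W E g t"
proof (rule gkM_le_gkM)
  show "finite W" using assms(1,2) by (rule rev_finite_subset)
  then show "finite V" "V \<noteq> {}" using assms(1-3) by auto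
  fix ps assume ps: "ps \<in> path_families V E t"
  obtain w where w: "w \<in> W" using assms(3) by blast
  define restrict where
    "restrict q = (if filter (\<lambda>x. x \<in> W) q = [] then [w] else filter (\<lambda>x. x \<in> W) q)" for q
  have restrict: "is_path W E (restrict q)" if "q \<in> set ps" for q
  proof -
    have q: "distinct q" "set q \<subseteq> V" "successively E q"
      using ps that unfolding path_families_def is_path_iff by auto
    have "successively E (filter (\<lambda>x. x \<in> W) q)"
      by (rule successively_filter_forward_closed[OF q(3,2) forward])
    then show ?thesis unfolding restrict_def is_path_iff using q(1) w by auto
  qed
  then have "map restrict ps \<in> path_families W E t"
    using ps unfolding path_families_def by auto
  moreover have "covered_weight g ps \<le> covered_weight g (map restrict ps)"
  proof -
    let ?U = "\<Union>p \<in> set ps. set p"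
    have "covered_weight g ps = sum g (?U \<inter> W)"
      unfolding covered_weight_def using path_families_covered_subset[OF ps] support
      by (intro sum.mono_neutral_right finite_subset[OF _ assms(1)]) (auto, fastforce)
    also have "\<dots> \<le> covered_weight g (map restrict ps)"
      unfolding covered_weight_def
    proof (rule sum_mono2)
      show "finite (\<Union>q \<in> set (map restrict ps). set q)"
        using restrict \<open>finite W\<close> unfolding is_path_def by (auto intro: finite_subset)
      show "?U \<inter> W \<subseteq> (\<Union>q \<in> set (map restrict ps). set q)"
      proof
        fix x assume "x \<in> ?U \<inter> W"
        then obtain q where q: "q \<in> set ps" "x \<in> set (filter (\<lambda>x. x \<in> W) q)" by auto
        then have "restrict q = filter (\<lambda>x. x \<in> W) q" unfolding restrict_def by (auto simp: filter_empty_conv)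
        then show "x \<in> (\<Union>q \<in> set (map restrict ps). set q)" using q by force
      qed
    qed simp
    finally show ?thesis .
  qed
  ultimately show "\<exists>qs \<in> path_families W E t. covered_weight g ps \<le> covered_weight g qs"
    by blast
qed

lemma gkM_eq_of_embedding_onto_support:
  assumes "finite V1" "finite V2" "V1 \<noteq> {}" "inj_on \<phi> V1" "\<phi> ` V1 \<subseteq> V2"
    and edges: "\<And>x y. x \<in> V1 \<Longrightarrow> y \<in> V1 \<Longrightarrow> E2 (\<phi> x) (\<phi> y) \<longleftrightarrow> E1 x y"
    and forward: "\<And>x y. x \<in> V1 \<Longrightarrow> y \<in> V2 \<Longrightarrow> E2 (\<phi> x) y \<Longrightarrow> y \<in> \<phi> ` V1"
    and weights: "\<And>x. x \<in> V1 \<Longrightarrow> g2 (\<phi> x) = g1 x"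
    and support: "\<And>y. y \<in> V2 - \<phi> ` V1 \<Longrightarrow> g2 y = 0"
  shows "gkM V1 E1 g1 t = gkM V2 E2 g2 t"
proof (rule antisym)
  show "gkM V1 E1 g1 t \<le> gkM V2 E2 g2 t"
    by (rule gkM_le_of_embedding[OF assms(1-5)]) (use edges weights in auto)
  have "gkM V2 E2 g2 t \<le> gkM (\<phi> ` V1) E2 g2 t"
    by (rule gkM_le_restrict_to_support[OF assms(2,5)]) (use assms(3) forward support in auto)
  also have "\<dots> \<le> gkM V1 E1 g1 t"
  proof (rule gkM_le_of_embedding[where \<phi> = "inv_into V1 \<phi>"])
    show "finite (\<phi> ` V1)" "\<phi> ` V1 \<noteq> {}" using assms(1,3) by auto
    show "inj_on (inv_into V1 \<phi>) (\<phi> ` V1)" by (rule inj_on_inv_into) simp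
    show "inv_into V1 \<phi> ` \<phi> ` V1 \<subseteq> V1" by (auto intro: inv_into_into)
    fix x y assume "x \<in> \<phi> ` V1" "y \<in> \<phi> ` V1"
    then show "E2 x y \<Longrightarrow> E1 (inv_into V1 \<phi> x) (inv_into V1 \<phi> y)"
      and "g1 (inv_into V1 \<phi> x) = g2 x"
      using edges weights assms(4) by auto
  qed fact
  finally show "gkM V2 E2 g2 t \<le> gkM V1 E1 g1 t" .
qed

section \<open>Unimodal enumerations\<close>

definition insert_at :: "nat \<Rightarrow> 'a \<Rightarrow> (nat \<Rightarrow> 'a) \<Rightarrow> nat \<Rightarrow> 'a" where
  "insert_at p v f t = (if t < p then f t else if t = p then v else f (t - 1))"

locale unimodal_enum =
  fixes n :: nat and \<sigma> :: "nat \<Rightarrow> nat" and m :: nat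
  assumes bij: "bij_betw \<sigma> {0..n} {1..Suc n}"
    and start: "\<sigma> 0 = 1"
    and peak_pos: "0 < m" "m \<le> n"
    and peak: "\<sigma> m = Suc n"
    and incr: "\<And>s t. s < t \<Longrightarrow> t \<le> m \<Longrightarrow> \<sigma> s < \<sigma> t"
    and decr: "\<And>s t. m \<le> s \<Longrightarrow> s < t \<Longrightarrow> t \<le> n \<Longrightarrow> \<sigma> t < \<sigma> s"
begin

lemma enum_image: "\<sigma> ` {0..n} = {1..Suc n}"
  using bij by (simp add: bij_betw_def)

lemma enum_inj: "s \<le> n \<Longrightarrow> t \<le> n \<Longrightarrow> \<sigma> s = \<sigma> t \<Longrightarrow> s = t"
  using bij by (auto simp: bij_betw_def dest: inj_onD)

lemma inj_on_enum: "A \<subseteq> {0..n} \<Longrightarrow> inj_on \<sigma> A"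
  by (meson atLeastAtMost_iff enum_inj inj_onI subsetD)

lemma card_image_enum: "A \<subseteq> {0..n} \<Longrightarrow> card (\<sigma> ` A) = card A"
  by (rule card_image) (rule inj_on_enum)

lemma enum_range: "t \<le> n \<Longrightarrow> 1 \<le> \<sigma> t \<and> \<sigma> t \<le> Suc n"
  using enum_image by auto

lemma enum_surj: "1 \<le> x \<Longrightarrow> x \<le> Suc n \<Longrightarrow> \<exists>t\<le>n. \<sigma> t = x"
  using enum_image by (metis atLeastAtMost_iff imageE)

lemma enum_below_peak: "t \<le> n \<Longrightarrow> t \<noteq> m \<Longrightarrow> \<sigma> t \<le> n"
  using enum_range[of t] enum_inj[of t m] peak peak_pos by fastforce

lemma incr_iff: "s \<le> m \<Longrightarrow> t \<le> m \<Longrightarrow> \<sigma> s \<le> \<sigma> t \<longleftrightarrow> s \<le> t"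
  using incr[of s t] incr[of t s] by (cases s t rule: linorder_cases) auto

lemma decr_iff: "m \<le> s \<Longrightarrow> s \<le> n \<Longrightarrow> m \<le> t \<Longrightarrow> t \<le> n \<Longrightarrow> \<sigma> s \<le> \<sigma> t \<longleftrightarrow> t \<le> s"
  using decr[of s t] decr[of t s] by (cases s t rule: linorder_cases) auto

lemma insert_at_image:
  assumes "p \<le> Suc n"
  shows "insert_at p v \<sigma> ` {0..Suc n} = insert v (\<sigma> ` {0..n})"
proof -
  have dom: "{0..Suc n} = {0..<p} \<union> {p} \<union> Suc ` {p..n}" using assms by auto
  have left: "insert_at p v \<sigma> ` {0..<p} = \<sigma> ` {0..<p}"
    by (rule image_cong) (auto simp: insert_at_def)
  have right: "insert_at p v \<sigma> ` Suc ` {p..n} = \<sigma> ` {p..n}"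
    unfolding image_image by (rule image_cong) (auto simp: insert_at_def)
  have "{0..n} = {0..<p} \<union> {p..n}" using assms by auto
  then show ?thesis unfolding dom image_Un left right by (auto simp: insert_at_def)
qed

lemma insert_max_next_to_peak:
  assumes p: "p = m \<or> p = Suc m"
  shows "unimodal_enum (Suc n) (insert_at p (Suc (Suc n)) \<sigma>) p"
proof
  let ?\<tau> = "insert_at p (Suc (Suc n)) \<sigma>"
  have "?\<tau> ` {0..Suc n} = {1..Suc (Suc n)}"
    using p peak_pos enum_image by (subst insert_at_image) auto
  then show "bij_betw ?\<tau> {0..Suc n} {1..Suc (Suc n)}"
    unfolding bij_betw_def by (simp add: eq_card_imp_inj_on)
  show "?\<tau> 0 = 1" "0 < p" "p \<le> Suc n" "?\<tau> p = Suc (Suc n)"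
    using p peak_pos start by (auto simp: insert_at_def)
  show "?\<tau> s < ?\<tau> t" if "s < t" "t \<le> p" for s t
    using that p incr[of s t] enum_range[of s] peak_pos by (auto simp: insert_at_def)
  show "?\<tau> t < ?\<tau> s" if "p \<le> s" "s < t" "t \<le> Suc n" for s t
  proof -
    have "\<sigma> (t - 1) \<le> Suc n" using that enum_range[of "t - 1"] by simp
    then show ?thesis using that p decr[of "s - 1" "t - 1"] by (auto simp: insert_at_def)
  qed
qed

lemma card_level_set:
  assumes "k \<le> Suc n"
  shows "card {t \<in> {0..n}. \<sigma> t \<le> k} = k"
proof -
  have "\<sigma> ` {t \<in> {0..n}. \<sigma> t \<le> k} = {1..k}"
    using enum_range enum_surj assms by (force simp: image_iff)
  moreover have "card (\<sigma> ` {t \<in> {0..n}. \<sigma> t \<le> k}) = card {t \<in> {0..n}. \<sigma> t \<le> k}"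
    by (rule card_image_enum) auto
  ultimately show ?thesis by simp
qed

text \<open>For \<open>a < m \<le> b\<close>, \<open>Suc n + a - b\<close> is the diagonal index \<open>\<lambda>\<^sub>1 + i - j\<close> of the box
  \<open>(i, j) = (a + 1, b + 1 - m)\<close> whose labels are \<open>\<sigma> a\<close> and \<open>\<sigma> b\<close>.\<close>

lemma level_le_antidiagonal:
  assumes "a < m" "m \<le> b" "b \<le> n" "k \<le> Suc n" "k < \<sigma> b"
    and "\<And>t. a < t \<Longrightarrow> t < m \<Longrightarrow> k < \<sigma> t"
  shows "k \<le> Suc n + a - b"
proof -
  have "{t \<in> {0..n}. \<sigma> t \<le> k} \<subseteq> {0..a} \<union> {Suc b..n}"
  proof
    fix t assume t: "t \<in> {t \<in> {0..n}. \<sigma> t \<le> k}"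
    show "t \<in> {0..a} \<union> {Suc b..n}"
    proof (cases "t < m")
      case True
      then have "t \<le> a" using assms(6)[of t] t by (cases "t \<le> a") auto
      then show ?thesis by simp
    next
      case False
      then have "\<not> t \<le> b" using t assms(2,3,5) decr_iff[of b t] by auto
      then show ?thesis using t by auto
    qed
  qed
  then have "card {t \<in> {0..n}. \<sigma> t \<le> k} \<le> card ({0..a} \<union> {Suc b..n})"
    by (intro card_mono) auto
  also have "\<dots> = Suc a + (n - b)" using assms(1-3) by (subst card_Un_disjoint) auto
  finally show ?thesis using card_level_set[OF assms(4)] assms(1-3) by simp
qed

lemma level_ge_antidiagonal:
  assumes "a < m" "m \<le> b" "b \<le> n" "k \<le> Suc n" "\<sigma> a \<le> k"
    and "\<And>t. b < t \<Longrightarrow> t \<le> n \<Longrightarrow> \<sigma> t \<le> k"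
  shows "Suc n + a - b \<le> k"
proof -
  have "\<sigma> t \<le> k" if "t \<le> a" for t
    using that assms(1,5) incr_iff[of t a] by simp
  then have "{0..a} \<union> {Suc b..n} \<subseteq> {t \<in> {0..n}. \<sigma> t \<le> k}"
    using assms by auto
  then have "card ({0..a} \<union> {Suc b..n}) \<le> card {t \<in> {0..n}. \<sigma> t \<le> k}"
    by (intro card_mono) auto
  moreover have "card ({0..a} \<union> {Suc b..n}) = Suc a + (n - b)"
    using assms(1-3) by (subst card_Un_disjoint) auto
  ultimately show ?thesis using card_level_set[OF assms(4)] assms(1-3) by simp
qed

lemma antidiagonal_between:
  assumes "a < m" "m \<le> b" "b \<le> n" "\<sigma> a < \<sigma> b"
  shows "\<sigma> a \<le> Suc n + a - b" "Suc n + a - b < \<sigma> b"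
proof -
  show "\<sigma> a \<le> Suc n + a - b"
    using assms enum_range[of a] incr by (intro level_le_antidiagonal) auto
  have "\<sigma> t \<le> \<sigma> b - 1" if "b < t" "t \<le> n" for t
    using that assms(2) decr[of b t] by simp
  then have "Suc n + a - b \<le> \<sigma> b - 1"
    using assms enum_range[of b] by (intro level_ge_antidiagonal) auto
  then show "Suc n + a - b < \<sigma> b" using assms(4) by linarith
qed

lemma antidiagonal_corner:
  assumes "a < m" "m \<le> b" "b \<le> n" "\<sigma> a \<le> k" "k < \<sigma> b"
  obtains a' b' where "a \<le> a'" "a' < m" "b \<le> b'" "b' \<le> n" "\<sigma> a' \<le> k" "k < \<sigma> b'"
    "k = Suc n + a' - b'"
proof -
  let ?A = "{t. t < m \<and> \<sigma> t \<le> k}" and ?B = "{t. m \<le> t \<and> t \<le> n \<and> k < \<sigma> t}"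
  have A: "finite ?A" "a \<in> ?A" and B: "finite ?B" "b \<in> ?B" using assms by auto
  define a' where "a' = Max ?A"
  define b' where "b' = Max ?B"
  have a'A: "a' \<in> ?A" and b'B: "b' \<in> ?B"
    unfolding a'_def b'_def using A B by (metis Max_in empty_iff)+
  moreover have "a \<le> a'" "b \<le> b'" unfolding a'_def b'_def using A B by simp_all
  moreover have "k < \<sigma> t" if "a' < t" "t < m" for t
  proof (rule ccontr)
    assume "\<not> k < \<sigma> t"
    then have "t \<in> ?A" using that by simp
    then show False using Max_ge[OF A(1)] that(1) unfolding a'_def by (meson leD)
  qed
  moreover have "\<sigma> t \<le> k" if "b' < t" "t \<le> n" for t
  proof (rule ccontr)
    assume "\<not> \<sigma> t \<le> k"
    then have "t \<in> ?B" using that b'B by simp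
    then show False using Max_ge[OF B(1)] that(1) unfolding b'_def by (meson leD)
  qed
  ultimately have a': "a \<le> a'" "a' < m" "\<sigma> a' \<le> k" "\<And>t. a' < t \<Longrightarrow> t < m \<Longrightarrow> k < \<sigma> t"
    and b': "b \<le> b'" "m \<le> b'" "b' \<le> n" "k < \<sigma> b'" "\<And>t. b' < t \<Longrightarrow> t \<le> n \<Longrightarrow> \<sigma> t \<le> k"
    by auto
  have "k \<le> Suc n" using assms enum_range[of b] by simp
  then have "k = Suc n + a' - b'"
    using level_le_antidiagonal[of a' b' k] level_ge_antidiagonal[of a' b' k] a' b' by simp
  then show ?thesis using that a' b' by blast
qed

lemma le_card_above_iff:
  assumes j: "1 \<le> j"
  shows "j \<le> card {t \<in> {m..n}. x < \<sigma> t} \<longleftrightarrow> m + j \<le> Suc n \<and> x < \<sigma> (m + j - 1)"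
proof
  assume a: "j \<le> card {t \<in> {m..n}. x < \<sigma> t}"
  show "m + j \<le> Suc n \<and> x < \<sigma> (m + j - 1)"
  proof (rule ccontr)
    assume na: "\<not> (m + j \<le> Suc n \<and> x < \<sigma> (m + j - 1))"
    have "{t \<in> {m..n}. x < \<sigma> t} \<subseteq> {m..<m + j - 1}"
    proof
      fix t assume t: "t \<in> {t \<in> {m..n}. x < \<sigma> t}"
      show "t \<in> {m..<m + j - 1}"
      proof (rule ccontr)
        assume "t \<notin> {m..<m + j - 1}"
        then have tt: "m + j - 1 \<le> t" using t by auto
        then have "m + j \<le> Suc n" using t j by auto
        moreover have "\<sigma> t \<le> \<sigma> (m + j - 1)" using decr_iff[of t "m + j - 1"] tt t j by auto
        ultimately show False using na t by auto
      qed
    qed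
    then have "card {t \<in> {m..n}. x < \<sigma> t} \<le> card {m..<m + j - 1}" by (intro card_mono) auto
    then have "card {t \<in> {m..n}. x < \<sigma> t} \<le> j - 1" by simp
    then show False using a j by simp
  qed
next
  assume a: "m + j \<le> Suc n \<and> x < \<sigma> (m + j - 1)"
  have "{m..m + j - 1} \<subseteq> {t \<in> {m..n}. x < \<sigma> t}"
  proof
    fix t assume t: "t \<in> {m..m + j - 1}"
    then have "\<sigma> (m + j - 1) \<le> \<sigma> t" using decr_iff[of "m + j - 1" t] a j by auto
    then show "t \<in> {t \<in> {m..n}. x < \<sigma> t}" using a t by auto
  qed
  then have "card {m..m + j - 1} \<le> card {t \<in> {m..n}. x < \<sigma> t}" by (intro card_mono) auto
  then show "j \<le> card {t \<in> {m..n}. x < \<sigma> t}" using j by simp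
qed

end

section \<open>Coxeter elements as unimodal cycles\<close>

locale coxeter_cycle = unimodal_enum +
  fixes c :: "nat \<Rightarrow> nat"
  assumes step: "\<And>t. t < n \<Longrightarrow> c (\<sigma> t) = \<sigma> (Suc t)"
    and wrap: "c (\<sigma> n) = 1"
    and fixed: "\<And>x. x \<notin> {1..Suc n} \<Longrightarrow> c x = x"
begin

lemma comp_right_transpose:
  "coxeter_cycle (Suc n) (insert_at (Suc m) (Suc (Suc n)) \<sigma>) (Suc m)
     (c \<circ> transpose (Suc n) (Suc (Suc n)))"
proof -
  let ?\<tau> = "insert_at (Suc m) (Suc (Suc n)) \<sigma>" and ?T = "transpose (Suc n) (Suc (Suc n))"
  interpret new: unimodal_enum "Suc n" ?\<tau> "Suc m" by (rule insert_max_next_to_peak) simp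
  show ?thesis
  proof
    fix t assume t: "t < Suc n"
    consider "t < m" | "t = m" | "t = Suc m" | "Suc m < t" by linarith
    then show "(c \<circ> ?T) (?\<tau> t) = ?\<tau> (Suc t)"
    proof cases
      case 1
      then show ?thesis using step[of t] enum_below_peak[of t] peak_pos by (simp add: insert_at_def)
    next
      case 2
      then show ?thesis using fixed[of "Suc (Suc n)"] peak by (simp add: insert_at_def)
    next
      case 3
      then show ?thesis using t step[of m] peak by (simp add: insert_at_def)
    next
      case 4
      then have "t - 1 < n" "t - 1 \<noteq> m" using t by auto
      then show ?thesis using 4 step[of "t - 1"] enum_below_peak[of "t - 1"] by (simp add: insert_at_def)
    qed
  next
    show "(c \<circ> ?T) (?\<tau> (Suc n)) = 1"
      using wrap peak enum_below_peak[of n] peak_pos by (cases "m = n") (auto simp: insert_at_def)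
  next
    fix x :: nat assume "x \<notin> {1..Suc (Suc n)}"
    then show "(c \<circ> ?T) x = x" using fixed by (auto simp: transpose_def)
  qed
qed

lemma comp_left_transpose:
  "coxeter_cycle (Suc n) (insert_at m (Suc (Suc n)) \<sigma>) m
     (transpose (Suc n) (Suc (Suc n)) \<circ> c)"
proof -
  let ?\<tau> = "insert_at m (Suc (Suc n)) \<sigma>" and ?T = "transpose (Suc n) (Suc (Suc n))"
  interpret new: unimodal_enum "Suc n" ?\<tau> m by (rule insert_max_next_to_peak) simp
  show ?thesis
  proof
    fix t assume t: "t < Suc n"
    consider "Suc t < m" | "Suc t = m" | "t = m" | "m < t" by linarith
    then show "(?T \<circ> c) (?\<tau> t) = ?\<tau> (Suc t)"
    proof cases
      case 1
      then show ?thesis using step[of t] enum_below_peak[of "Suc t"] peak_pos by (simp add: insert_at_def)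
    next
      case 2
      then show ?thesis using step[of t] peak peak_pos by (simp add: insert_at_def)
    next
      case 3
      then show ?thesis using fixed[of "Suc (Suc n)"] peak by (simp add: insert_at_def)
    next
      case 4
      then show ?thesis using t step[of "t - 1"] enum_below_peak[of t] by (simp add: insert_at_def)
    qed
  next
    show "(?T \<circ> c) (?\<tau> (Suc n)) = 1"
      using wrap peak_pos by (simp add: insert_at_def)
  next
    fix x :: nat assume "x \<notin> {1..Suc (Suc n)}"
    then show "(?T \<circ> c) x = x" using fixed by (auto simp: transpose_def)
  qed
qed

end

definition transp_word :: "nat list \<Rightarrow> nat \<Rightarrow> nat" where
  "transp_word xs = foldr (\<lambda>i g. transpose i (Suc i) \<circ> g) xs id"

lemma transp_word_append: "transp_word (xs @ ys) = transp_word xs \<circ> transp_word ys"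
  by (induction xs) (auto simp: transp_word_def)

lemma transp_word_commute:
  assumes "\<forall>i \<in> set xs. Suc i < N"
  shows "transp_word xs \<circ> transpose N (Suc N) = transpose N (Suc N) \<circ> transp_word xs"
  using assms
proof (induction xs)
  case (Cons i xs)
  let ?T = "transpose N (Suc N)" and ?t = "transpose i (Suc i)"
  have "?t (?T a) = ?T (?t a)" for a
    using Cons.prems by (simp add: transpose_def)
  moreover have "transp_word xs (?T a) = ?T (transp_word xs a)" for a
    using Cons by (simp add: fun_eq_iff)
  moreover have "transp_word (i # xs) = ?t \<circ> transp_word xs"
    by (simp add: transp_word_def)
  ultimately show ?case by (simp add: fun_eq_iff)
qed (simp add: transp_word_def)

lemma coxeter_cycle_of_word:
  assumes "1 \<le> n" "distinct xs" "set xs = {1..n}"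
  shows "\<exists>\<sigma> m. coxeter_cycle n \<sigma> m (transp_word xs)"
  using assms
proof (induction n arbitrary: xs rule: nat_induct_at_least)
  case base
  have "xs = [1]"
  proof -
    have "length xs = 1" using base distinct_card[of xs] by simp
    then obtain x where "xs = [x]" by (metis One_nat_def length_0_conv length_Suc_conv)
    then show ?thesis using base by simp
  qed
  then have "transp_word xs = transpose 1 2" by (simp add: transp_word_def numeral_2_eq_2)
  moreover have "coxeter_cycle 1 Suc 1 (transpose 1 2)"
    by unfold_locales (auto simp: bij_betw_def transpose_def)
  ultimately show ?case by metis
next
  case (Suc n)
  let ?T = "transpose (Suc n) (Suc (Suc n))"
  have "Suc n \<in> set xs" using Suc.prems by simp
  then obtain ys zs where xs: "xs = ys @ Suc n # zs" by (meson split_list)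
  have "distinct (ys @ zs)" "Suc n \<notin> set (ys @ zs)" using Suc.prems(1) unfolding xs by auto
  moreover have "set (ys @ zs) = set xs - {Suc n}" using calculation unfolding xs by auto
  ultimately have "distinct (ys @ zs)" "set (ys @ zs) = {1..n}" using Suc.prems(2) by auto
  then obtain \<sigma> m where "coxeter_cycle n \<sigma> m (transp_word (ys @ zs))"
    using Suc.IH by blast
  then interpret coxeter_cycle n \<sigma> m "transp_word (ys @ zs)" .
  have below: "\<forall>i \<in> set ws. Suc i < Suc n" if "ws \<in> {ys, zs}" "n \<notin> set ws" for ws
  proof
    fix i assume "i \<in> set ws"
    then have "i \<in> {1..n}" "i \<noteq> n" using that \<open>set (ys @ zs) = {1..n}\<close> by auto
    then show "Suc i < Suc n" by simp
  qed
  have word: "transp_word xs = transp_word ys \<circ> ?T \<circ> transp_word zs"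
    unfolding xs transp_word_append by (simp add: transp_word_def comp_assoc)
  have "n \<in> set ys \<and> n \<notin> set zs \<or> n \<in> set zs \<and> n \<notin> set ys"
    using \<open>distinct (ys @ zs)\<close> \<open>set (ys @ zs) = {1..n}\<close> Suc.hyps by auto
  then show ?case
  proof
    assume "n \<in> set ys \<and> n \<notin> set zs"
    then have "transp_word xs = transp_word (ys @ zs) \<circ> ?T"
      using word transp_word_commute[OF below[of zs]] by (simp add: transp_word_append comp_assoc)
    then show ?thesis using comp_right_transpose by metis
  next
    assume "n \<in> set zs \<and> n \<notin> set ys"
    then have "transp_word xs = ?T \<circ> transp_word (ys @ zs)"
      using word transp_word_commute[OF below[of ys]] by (simp add: transp_word_append comp_assoc)
    then show ?thesis using comp_left_transpose by metis
  qed
qed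

lemma coxeter_imp_coxeter_cycle:
  assumes "1 \<le> n" "coxeter n c"
  shows "\<exists>\<sigma> m. coxeter_cycle n \<sigma> m c"
  using assms coxeter_cycle_of_word unfolding coxeter_def transp_word_def by metis

section \<open>Boxes of \<open>\<lambda>(c)\<close> as transpositions\<close>

lemma sq_subset_Fer: "sq lam k \<subseteq> Fer lam"
  unfolding sq_def by blast

context coxeter_cycle
begin

abbreviation lam :: "nat \<Rightarrow> nat" where
  "lam \<equiv> lamc n c"

lemma orbit_eq: "j \<le> n \<Longrightarrow> (c ^^ j) 1 = \<sigma> j"
  by (induction j) (simp_all add: start step)

lemma m_idx_eq: "m_idx n c = m"
  unfolding m_idx_def
proof (rule Least_equality)
  show "(c ^^ m) 1 = Suc n" using orbit_eq peak peak_pos by simp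
  show "m \<le> j" if "(c ^^ j) 1 = Suc n" for j
    using that orbit_eq[of j] enum_inj[of j m] peak peak_pos by (cases "j \<le> n") auto
qed

lemma Lset_eq: "Lset n c = \<sigma> ` {0..<m}"
proof -
  have "Lset n c = {\<sigma> j | j. j < m}"
    unfolding Lset_def m_idx_eq using orbit_eq peak_pos by (intro Collect_cong ex_cong1) auto
  then show ?thesis by auto
qed

lemma Rset_eq: "Rset n c = \<sigma> ` {m..n}"
proof -
  have "Rset n c = {\<sigma> j | j. m \<le> j \<and> j \<le> n}"
    unfolding Rset_def m_idx_eq using orbit_eq by (intro Collect_cong ex_cong1) auto
  then show ?thesis by auto
qed

lemma card_Lset: "card (Lset n c) = m"
  unfolding Lset_eq using peak_pos by (subst card_image_enum) auto

lemma ell_eq: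
  assumes "1 \<le> i" "i \<le> m"
  shows "ell n c i = \<sigma> (i - 1)"
proof -
  have "sorted_wrt (<) (map \<sigma> [0..<m])"
    unfolding sorted_wrt_iff_nth_less using incr by simp
  then have "sorted_list_of_set (\<sigma> ` {0..<m}) = map \<sigma> [0..<m]"
    using sorted_list_of_set_unique[of "\<sigma> ` {0..<m}" "map \<sigma> [0..<m]"] card_Lset
    unfolding Lset_eq by simp
  then show ?thesis unfolding ell_def Lset_eq using assms by simp
qed

lemma lamc_eq:
  assumes "1 \<le> i" "i \<le> m"
  shows "lam i = card {t \<in> {m..n}. \<sigma> (i - 1) < \<sigma> t}"
proof -
  have "lam i = card {r \<in> \<sigma> ` {m..n}. \<sigma> (i - 1) < r}"
    unfolding lamc_def card_Lset using assms ell_eq Rset_eq by simp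
  also have "{r \<in> \<sigma> ` {m..n}. \<sigma> (i - 1) < r} = \<sigma> ` {t \<in> {m..n}. \<sigma> (i - 1) < \<sigma> t}" by auto
  also have "card \<dots> = card {t \<in> {m..n}. \<sigma> (i - 1) < \<sigma> t}" by (rule card_image_enum) auto
  finally show ?thesis .
qed

lemma lamc_1: "lam 1 = Suc n - m"
proof -
  have "1 < \<sigma> t" if "t \<in> {m..n}" for t
    using that enum_range[of t] enum_inj[of t 0] start peak_pos by fastforce
  then have "{t \<in> {m..n}. \<sigma> (1 - 1) < \<sigma> t} = {m..n}" using start by auto
  then show ?thesis using lamc_eq[of 1] peak_pos by simp
qed

lemma mem_Fer_iff: "(i, j) \<in> Fer lam \<longleftrightarrow>
   1 \<le> i \<and> i \<le> m \<and> 1 \<le> j \<and> m + j \<le> Suc n \<and> \<sigma> (i - 1) < \<sigma> (m + j - 1)"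
proof (cases "1 \<le> i \<and> i \<le> m")
  case True
  then show ?thesis
    unfolding Fer_def using lamc_eq[of i] le_card_above_iff[of j "\<sigma> (i - 1)"] by auto
next
  case False
  then show ?thesis unfolding Fer_def lamc_def card_Lset by auto
qed

lemma mem_Diag_iff: "(i, j) \<in> Diag lam k \<longleftrightarrow> (i, j) \<in> Fer lam \<and> Suc n - m + i = k + j"
  unfolding Diag_def lamc_1 by simp

lemma mem_sq_iff: "(i, j) \<in> sq lam k \<longleftrightarrow> (i, j) \<in> Fer lam \<and> \<sigma> (i - 1) \<le> k \<and> k < \<sigma> (m + j - 1)"
proof
  assume "(i, j) \<in> sq lam k"
  then obtain i' j' where ij: "(i, j) \<in> Fer lam" "(i', j') \<in> Diag lam k" "i \<le> i'" "j \<le> j'"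
    unfolding sq_def by auto
  have F: "1 \<le> i" "i \<le> m" "1 \<le> j" "m + j \<le> Suc n"
    using ij(1) mem_Fer_iff by auto
  have F': "1 \<le> i'" "i' \<le> m" "1 \<le> j'" "m + j' \<le> Suc n" "\<sigma> (i' - 1) < \<sigma> (m + j' - 1)"
       "k = Suc n + (i' - 1) - (m + j' - 1)"
    using ij(2) peak_pos unfolding mem_Diag_iff mem_Fer_iff by auto
  have "\<sigma> (i' - 1) \<le> k" "k < \<sigma> (m + j' - 1)"
    using antidiagonal_between[of "i' - 1" "m + j' - 1"] F' by auto
  moreover have "\<sigma> (i - 1) \<le> \<sigma> (i' - 1)"
    using incr_iff[of "i - 1" "i' - 1"] F F' ij by simp
  moreover have "\<sigma> (m + j' - 1) \<le> \<sigma> (m + j - 1)"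
    using decr_iff[of "m + j' - 1" "m + j - 1"] F F' ij by simp
  ultimately show "(i, j) \<in> Fer lam \<and> \<sigma> (i - 1) \<le> k \<and> k < \<sigma> (m + j - 1)"
    using ij(1) by simp
next
  assume a: "(i, j) \<in> Fer lam \<and> \<sigma> (i - 1) \<le> k \<and> k < \<sigma> (m + j - 1)"
  then have F: "1 \<le> i" "i \<le> m" "1 \<le> j" "m + j \<le> Suc n"
    using mem_Fer_iff by auto
  obtain a' b' where c: "i - 1 \<le> a'" "a' < m" "m + j - 1 \<le> b'" "b' \<le> n" "\<sigma> a' \<le> k" "k < \<sigma> b'"
    "k = Suc n + a' - b'"
    by (rule antidiagonal_corner[of "i - 1" "m + j - 1" k]) (use F a in auto)
  then have "(Suc a', Suc b' - m) \<in> Diag lam k"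
    unfolding mem_Diag_iff mem_Fer_iff using F by auto
  moreover have "i \<le> Suc a'" "j \<le> Suc b' - m" using c F by auto
  ultimately show "(i, j) \<in> sq lam k" unfolding sq_def using a by force
qed

definition box_transp :: "nat \<times> nat \<Rightarrow> nat \<times> nat" where
  "box_transp b = (\<sigma> (fst b - 1), \<sigma> (m + snd b - 1))"

lemma card_Lset_le:
  assumes "a < m"
  shows "card {x \<in> Lset n c. x \<le> \<sigma> a} = Suc a"
proof -
  have "{x \<in> Lset n c. x \<le> \<sigma> a} = \<sigma> ` {0..a}"
    unfolding Lset_eq using assms incr_iff by (auto simp: image_iff)
  then show ?thesis using assms peak_pos by (simp add: card_image_enum)
qed

lemma card_Rset_ge:
  assumes "m \<le> b" "b \<le> n"
  shows "card {x \<in> Rset n c. \<sigma> b \<le> x} = Suc b - m"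
proof -
  have "{x \<in> Rset n c. \<sigma> b \<le> x} = \<sigma> ` {m..b}"
    unfolding Rset_eq using assms decr_iff by (auto simp: image_iff)
  then show ?thesis using assms by (simp add: card_image_enum)
qed

lemma rep_box_transp:
  assumes "x \<in> Fer lam"
  shows "rep n c f (box_transp x) = f x"
proof -
  obtain i j where x: "x = (i, j)" by fastforce
  have F: "1 \<le> i" "i \<le> m" "1 \<le> j" "m + j \<le> Suc n" "\<sigma> (i - 1) < \<sigma> (m + j - 1)"
    using assms mem_Fer_iff unfolding x by auto
  have "\<sigma> (i - 1) \<in> Lset n c" "\<sigma> (m + j - 1) \<in> Rset n c"
    unfolding Lset_eq Rset_eq using F by (auto intro!: imageI)
  moreover have "card {x \<in> Lset n c. x \<le> \<sigma> (i - 1)} = i"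
    using card_Lset_le[of "i - 1"] F by simp
  moreover have "card {x \<in> Rset n c. \<sigma> (m + j - 1) \<le> x} = j"
    using card_Rset_ge[of "m + j - 1"] F by simp
  ultimately show ?thesis unfolding x rep_def box_transp_def Let_def using F by simp
qed

lemma inj_on_box_transp: "inj_on box_transp (Fer lam)"
proof (rule inj_onI)
  fix x x' assume x: "x \<in> Fer lam" "x' \<in> Fer lam" "box_transp x = box_transp x'"
  obtain i j i' j' where ij: "x = (i, j)" "x' = (i', j')" by fastforce
  have F: "1 \<le> i" "i \<le> m" "1 \<le> j" "m + j \<le> Suc n" "1 \<le> i'" "i' \<le> m" "1 \<le> j'" "m + j' \<le> Suc n"
    using x(1,2) unfolding ij mem_Fer_iff by auto
  then have "i - 1 = i' - 1" "m + j - 1 = m + j' - 1"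
    using x(3) enum_inj[of "i - 1" "i' - 1"] enum_inj[of "m + j - 1" "m + j' - 1"] peak_pos
    unfolding ij box_transp_def by auto
  then show "x = x'" using F unfolding ij by auto
qed

lemma box_transp_in_ar_k: "box_transp ` sq lam k \<subseteq> ar_k n k"
proof
  fix y assume "y \<in> box_transp ` sq lam k"
  then obtain i j where y: "y = box_transp (i, j)" "(i, j) \<in> sq lam k" by auto
  then have F: "1 \<le> i" "i \<le> m" "1 \<le> j" "m + j \<le> Suc n" "\<sigma> (i - 1) < \<sigma> (m + j - 1)"
    "\<sigma> (i - 1) \<le> k" "k < \<sigma> (m + j - 1)"
    unfolding mem_sq_iff mem_Fer_iff by auto
  moreover have "1 \<le> \<sigma> (i - 1)" "\<sigma> (m + j - 1) \<le> Suc n"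
    using enum_range[of "i - 1"] enum_range[of "m + j - 1"] F peak_pos by auto
  ultimately show "y \<in> ar_k n k"
    unfolding y box_transp_def ar_k_def ar_vert_def by simp
qed

lemma support_rep_in_box_transp_image:
  assumes "y \<in> ar_k n k" "rep n c f y \<noteq> 0"
  shows "y \<in> box_transp ` sq lam k"
proof -
  obtain l r where y: "y = (l, r)" by fastforce
  have "l \<in> Lset n c" "r \<in> Rset n c"
    using assms(2) unfolding y rep_def Let_def by (auto split: if_splits)
  then obtain a b where ab: "a < m" "l = \<sigma> a" "m \<le> b" "b \<le> n" "r = \<sigma> b"
    unfolding Lset_eq Rset_eq by auto
  have "l < r" "l \<le> k" "k < r" using assms(1) unfolding y ar_k_def ar_vert_def by auto
  then have "(Suc a, Suc b - m) \<in> sq lam k"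
    unfolding mem_sq_iff mem_Fer_iff using ab by simp
  moreover have "box_transp (Suc a, Suc b - m) = y"
    unfolding y box_transp_def using ab by simp
  ultimately show ?thesis by force
qed

text \<open>\<open>c\<close> moves the row label \<open>\<sigma> (i - 1)\<close> to the next row label and the column label
  \<open>\<sigma> (m + j - 1)\<close> to the next column label; it sends the last row label \<open>\<sigma> (m - 1)\<close> to
  \<open>Suc n\<close> and the last column label \<open>\<sigma> n\<close> to \<open>1\<close>, so \<open>AR(c)\<close> has no arrow leaving
  the diagram.\<close>

lemma ar_edge_box_transp_iff:
  assumes "(i, j) \<in> Fer lam"
  shows "ar_edge c (box_transp (i, j)) y \<longleftrightarrow>
    (i, Suc j) \<in> Fer lam \<and> y = box_transp (i, Suc j) \<or>
    (Suc i, j) \<in> Fer lam \<and> y = box_transp (Suc i, j)"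
proof -
  have F: "1 \<le> i" "i \<le> m" "1 \<le> j" "m + j \<le> Suc n" "\<sigma> (i - 1) < \<sigma> (m + j - 1)"
    using assms unfolding mem_Fer_iff by auto
  have row: "c (\<sigma> (i - 1)) = \<sigma> i" using step[of "i - 1"] F peak_pos by simp
  have col: "c (\<sigma> (m + j - 1)) = (if m + j \<le> n then \<sigma> (m + j) else 1)"
  proof (cases "m + j \<le> n")
    case False
    then have "m + j - 1 = n" using F by simp
    then show ?thesis using wrap False by simp
  qed (use step[of "m + j - 1"] F in simp)
  have "1 \<le> \<sigma> (i - 1)" "\<sigma> (m + j - 1) \<le> Suc n"
    using enum_range[of "i - 1"] enum_range[of "m + j - 1"] F peak_pos by auto
  then show ?thesis
    unfolding ar_edge_def box_transp_def mem_Fer_iff using F row col peak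
    by (cases "i = m") auto
qed

lemma ar_edge_box_transp_iff_gl_edge:
  assumes "x \<in> sq lam k" "x' \<in> sq lam k"
  shows "ar_edge c (box_transp x) (box_transp x') \<longleftrightarrow> gl_edge x x'"
proof -
  obtain i j where x: "x = (i, j)" by fastforce
  have Fer: "x \<in> Fer lam" "x' \<in> Fer lam" using assms sq_subset_Fer by auto
  have "box_transp x' = box_transp y \<longleftrightarrow> x' = y" if "y \<in> Fer lam" for y
    using inj_on_box_transp Fer(2) that by (auto dest: inj_onD)
  then show ?thesis
    unfolding x ar_edge_box_transp_iff[OF Fer(1)[unfolded x]] gl_edge_def
    using Fer(2) by (cases x') auto
qed

lemma ar_edge_box_transp_closed:
  assumes "x \<in> sq lam k" "y \<in> ar_k n k" "ar_edge c (box_transp x) y"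
  shows "y \<in> box_transp ` sq lam k"
proof -
  obtain i j where x: "x = (i, j)" by fastforce
  then have "x \<in> Fer lam" using assms(1) sq_subset_Fer by auto
  then obtain x' where "x' \<in> Fer lam" "y = box_transp x'"
    using assms(3) ar_edge_box_transp_iff unfolding x by blast
  moreover have "fst y \<le> k" "k < snd y" using assms(2) unfolding ar_k_def by auto
  ultimately have "x' \<in> sq lam k"
    unfolding box_transp_def by (cases x') (auto simp: mem_sq_iff)
  then show ?thesis using \<open>y = box_transp x'\<close> by blast
qed

lemma finite_Fer: "finite (Fer lam)"
  by (rule finite_subset[of _ "{..m} \<times> {..Suc n}"]) (auto simp: mem_Fer_iff)

lemma RSK_lam_c_eq_RSK_lam:
  assumes "b \<in> Fer lam"
  shows "RSK_lam_c n c f b = RSK_lam lam f b"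
proof -
  define k where "k = box_k lam b"
  have "snd b \<le> lam 1 + fst b" using assms lamc_1 by (cases b) (auto simp: mem_Fer_iff)
  then have "b \<in> sq lam k"
    using assms unfolding sq_def Diag_def k_def box_k_def by force
  have "gkM (sq lam k) gl_edge f t = gkM (ar_k n k) (ar_edge c) (rep n c f) t" for t
  proof (rule gkM_eq_of_embedding_onto_support)
    show "finite (sq lam k)" using finite_Fer sq_subset_Fer by (rule finite_subset[rotated])
    show "finite (ar_k n k)"
      by (rule finite_subset[of _ "{..Suc n} \<times> {..Suc n}"]) (auto simp: ar_k_def ar_vert_def)
    show "sq lam k \<noteq> {}" using \<open>b \<in> sq lam k\<close> by blast
    show "inj_on box_transp (sq lam k)"
      using inj_on_box_transp sq_subset_Fer by (rule inj_on_subset)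
    show "box_transp ` sq lam k \<subseteq> ar_k n k" by (rule box_transp_in_ar_k)
    show "rep n c f (box_transp x) = f x" if "x \<in> sq lam k" for x
      using that sq_subset_Fer rep_box_transp by blast
    show "rep n c f y = 0" if "y \<in> ar_k n k - box_transp ` sq lam k" for y
      using that support_rep_in_box_transp_image by blast
  qed (fact ar_edge_box_transp_iff_gl_edge ar_edge_box_transp_closed)+
  then show ?thesis unfolding RSK_lam_c_def RSK_lam_def gk_part_def k_def by simp
qed

end

theorem proposition6p4:
  fixes n :: nat and c :: "nat \<Rightarrow> nat"
  assumes "1 \<le> n" and "coxeter n c"
  shows "\<forall>f :: nat \<times> nat \<Rightarrow> nat. \<forall>b \<in> Fer (lamc n c).
           RSK_lam_c n c f b = RSK_lam (lamc n c) f b"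
proof -
  obtain \<sigma> m where "coxeter_cycle n \<sigma> m c"
    using coxeter_imp_coxeter_cycle[OF assms] by blast
  then interpret coxeter_cycle n \<sigma> m c .
  show ?thesis using RSK_lam_c_eq_RSK_lam by blast
qed

end
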